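(* Let $R$ be an environment with a single door pixel $s$, and let $A=|R|$ be the number of its pixels. Run the Depth-First Leader-Follower (DFLF) strategy defined in the context. The algorithm halts exactly when all pixels of $R$ are occupied by robots, and its makespan is $2A-1$.
   Context: Pixels are the unit squares of the integer grid, identified with their lower-left corners $(i,j)\in\mathbb{Z}^2$. Two pixels are neighbors if they share an edge, so $(i,j)$ has the four neighbors $(i\pm1,j)$ and $(i,j\pm1)$. The environment $R$ is a finite set of pixels that is connected under this neighbor relation. It contains a single distinguished door pixel $s\in R$. Time is discrete, $t=0,1,2,\dots$. At each time, every pixel of $R$ holds at most one robot. $p(r,t)$ denotes the pixel occupied by robot $r$ at time $t$, and $\mathrm{prev}(r,t)=p(r,t-1)$. In one time step a robot either stays where it is or moves to a neighboring pixel of $R$ that is unoccupied. Vacating rule: if a robot occupies pixel $q$ at time $t$ and a different pixel at time $t+1$, then no robot occupies $q$ at time $t+1$; so the earliest a vacated pixel can be re-entered is time $t+2$. At time $0$ exactly one robot is present, on $s$. Door rule: whenever the robot on $s$ leaves, a new robot appears on $s$ as soon as the vacating rule allows. A pixel of $R$ is a frontier pixel at time $t$ if no robot has occupied it at any time $\le t$. The DFLF strategy works as follows. - Each robot is either moving or stopped. A moving robot is either the leader or a follower. - The first robot is the leader. Each newly appearing robot becomes the successor of the robot that most recently left the door, and that robot becomes its predecessor $\mathrm{pred}(r)$. These relations never change. - At each step, the leader behaves as follows. If the leader has a neighboring frontier pixel, it moves to one of them (chosen arbitrarily). Otherwise it becomes stopped permanently and leadership passes to its successor. If the leader has no frontier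 neighbor and is on the door $s$, the algorithm halts. - A follower $r$ moves at time $t$ to the pixel $\mathrm{prev}(\mathrm{pred}(r),t)$ previously occupied by its predecessor. - A stopped robot never moves again. Makespan: the first time $t^*$ at which every pixel of $R$ is occupied. *)

theory Defs
  imports Main
begin

type_synonym pixel = "int \<times> int"

text \<open>Robots are numbered 0,1,2,... in order of appearance on the door, so robot k's
predecessor is robot k-1.  pos k t = Some p means robot k occupies pixel p at time t,
None means robot k has not yet appeared.  ldr t is the index of the current leader at time t.\<close>

definition nbr :: "pixel \<Rightarrow> pixel \<Rightarrow> bool" where
  "nbr p q \<longleftrightarrow> \<bar>fst p - fst q\<bar> + \<bar>snd p - snd q\<bar> = 1"

definition pix_connected :: "pixel set \<Rightarrow> bool" where
  "pix_connected R \<longleftrightarrow>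
     (\<forall>p\<in>R. \<forall>q\<in>R. (\<lambda>a b. a \<in> R \<and> b \<in> R \<and> nbr a b)\<^sup>*\<^sup>* p q)"

definition occ :: "(nat \<Rightarrow> nat \<Rightarrow> pixel option) \<Rightarrow> nat \<Rightarrow> pixel set" where
  "occ pos t = {q. \<exists>k. pos k t = Some q}"

definition frontier :: "pixel set \<Rightarrow> (nat \<Rightarrow> nat \<Rightarrow> pixel option) \<Rightarrow> nat \<Rightarrow> pixel set" where
  "frontier R pos t = {q \<in> R. \<forall>t'\<le>t. q \<notin> occ pos t'}"

definition halted ::
  "pixel set \<Rightarrow> pixel \<Rightarrow> (nat \<Rightarrow> nat \<Rightarrow> pixel option) \<Rightarrow> (nat \<Rightarrow> nat) \<Rightarrow> nat \<Rightarrow> bool" where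
  "halted R s pos ldr t \<longleftrightarrow>
     pos (ldr t) t = Some s \<and> \<not> (\<exists>q\<in>frontier R pos t. nbr s q)"

text \<open>The leader moves to a frontier neighbour if it has one,
otherwise it stops and leadership passes to its successor from time t+1 on (in the current
step the successor still acts as a follower).\<close>

definition dflf_step ::
  "pixel set \<Rightarrow> pixel \<Rightarrow> (nat \<Rightarrow> nat \<Rightarrow> pixel option) \<Rightarrow> (nat \<Rightarrow> nat) \<Rightarrow> nat \<Rightarrow> bool" where
  "dflf_step R s pos ldr t \<longleftrightarrow>
     (case pos (ldr t) t of
        None \<Rightarrow> ldr (t+1) = ldr t
      | Some q \<Rightarrow>
          (if \<exists>q'\<in>frontier R pos t. nbr q q'
           then ldr (t+1) = ldr t \<and>
                (\<exists>q'\<in>frontier R pos t. nbr q q' \<and> pos (ldr t) (t+1) = Some q')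
           else ldr (t+1) = Suc (ldr t) \<and> pos (ldr t) (t+1) = Some q))
   \<and> (\<forall>k. k < ldr t \<longrightarrow> pos k t \<noteq> None \<longrightarrow> pos k (t+1) = pos k t)
   \<and> (\<forall>k. ldr t < k \<longrightarrow> pos k t \<noteq> None \<longrightarrow> pos k (t+1) = pos (k-1) (t-1))
   \<and> (\<forall>k. pos k t = None \<longrightarrow>
          pos k (t+1) = (if s \<notin> occ pos t \<and> (k = 0 \<or> pos (k-1) t \<noteq> None)
                         then Some s else None))"

definition dflf_run ::
  "pixel set \<Rightarrow> pixel \<Rightarrow> (nat \<Rightarrow> nat \<Rightarrow> pixel option) \<Rightarrow> (nat \<Rightarrow> nat) \<Rightarrow> bool" where
  "dflf_run R s pos ldr \<longleftrightarrow>
     pos 0 0 = Some s \<and> (\<forall>k>0. pos k 0 = None) \<and> ldr 0 = 0 \<and>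
     (\<forall>t. (\<forall>t'\<le>t. \<not> halted R s pos ldr t') \<longrightarrow> dflf_step R s pos ldr t)"

definition makespan :: "pixel set \<Rightarrow> (nat \<Rightarrow> nat \<Rightarrow> pixel option) \<Rightarrow> nat" where
  "makespan R pos = (LEAST t. R \<subseteq> occ pos t)"

end

theory Submission
  imports Defs
begin

text \<open>While the algorithm runs, the moving robots form a convoy along a simple path
  c 0 = s, ..., c d: robot k (from the leader ldr t on) stands on c (t - 2k) and stood on
  c (t - 1 - 2k) one step earlier, so followers preserve the pattern and a new robot enters the
  door exactly at the even times.  A leader with a frontier neighbour extends the path; otherwise
  it stops on the end of the path, all of whose neighbours are visited, and the path shrinks.
  Hence t = d + 2 ldr t, and the visited pixels are the path plus the stopped robots' pixels,
  d + 1 + ldr t of them.  This bounds the running time by 2|R| - 2, so the run halts.  Halting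
  forces d = 0; the visited set is then closed under neighbours, hence all of R by
  connectivity, and it is all occupied, so |R| = ldr H + 1 and H = 2|R| - 2.  Before halting
  some pixel is free: c (d - 1) if d > 0, a frontier neighbour of the door if d = 0.\<close>

definition visited :: "(nat \<Rightarrow> nat \<Rightarrow> pixel option) \<Rightarrow> nat \<Rightarrow> pixel set" where
  "visited pos t = (\<Union>t'\<le>t. occ pos t')"

lemma visited_0: "visited pos 0 = occ pos 0"
  by (simp add: visited_def)

lemma visited_Suc: "visited pos (Suc t) = visited pos t \<union> occ pos (Suc t)"
  by (simp add: visited_def atMost_Suc sup_commute)

lemma occ_subset_visited: "occ pos t \<subseteq> visited pos t"
  by (auto simp: visited_def)

lemma frontier_eq_Diff_visited: "frontier R pos t = R - visited pos t"
  by (auto simp: frontier_def visited_def)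

definition stopped_pixels :: "(nat \<Rightarrow> nat \<Rightarrow> pixel option) \<Rightarrow> nat \<Rightarrow> nat \<Rightarrow> pixel set" where
  "stopped_pixels pos L t = {q. \<exists>k<L. pos k t = Some q}"

definition convoy :: "(nat \<Rightarrow> nat \<Rightarrow> pixel option) \<Rightarrow> nat \<Rightarrow> nat \<Rightarrow> (nat \<Rightarrow> pixel) \<Rightarrow> bool" where
  "convoy pos L t c \<longleftrightarrow>
     (\<forall>k\<ge>L. pos k t = (if 2 * k \<le> t then Some (c (t - 2 * k)) else None))"

lemma convoy_mono:
  assumes "convoy pos L t c" and "L \<le> L'" and "\<forall>i\<le>t - 2 * L'. c' i = c i"
  shows "convoy pos L' t c'"
  using assms unfolding convoy_def by auto

lemma occ_convoy:
  assumes "convoy pos L t c"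
  shows "occ pos t = stopped_pixels pos L t \<union> (\<lambda>k. c (t - 2 * k)) ` {k. L \<le> k \<and> 2 * k \<le> t}"
proof -
  have "pos k t = Some q \<longleftrightarrow> (k < L \<and> pos k t = Some q) \<or> (L \<le> k \<and> 2 * k \<le> t \<and> q = c (t - 2 * k))"
    for k q
    using assms unfolding convoy_def by (cases "L \<le> k") auto
  then show ?thesis
    unfolding occ_def stopped_pixels_def by blast
qed

lemma image_fun_upd_atMost_Suc: "(c(Suc d := q)) ` {..Suc d} = insert q (c ` {..d})"
  by (auto simp: atMost_Suc)

lemma inj_on_fun_upd_atMost_Suc:
  assumes "inj_on c {..d}" and "q \<notin> c ` {..d}"
  shows "inj_on (c(Suc d := q)) {..Suc d}"
  using assms by (auto simp: atMost_Suc inj_on_def)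

lemma pix_connected_nbr_closed_subset:
  assumes "pix_connected R" and "s \<in> R" and "s \<in> V"
    and closed: "\<forall>p\<in>V. \<forall>q\<in>R. nbr p q \<longrightarrow> q \<in> V"
  shows "R \<subseteq> V"
proof
  fix q assume "q \<in> R"
  then have "(\<lambda>a b. a \<in> R \<and> b \<in> R \<and> nbr a b)\<^sup>*\<^sup>* s q"
    using assms(1,2) unfolding pix_connected_def by blast
  then show "q \<in> V"
  proof (induction rule: rtranclp_induct)
    case base
    then show ?case using \<open>s \<in> V\<close> .
  next
    case (step p q)
    then show ?case using closed by blast
  qed
qed

context
  fixes R :: "pixel set" and s :: pixel
    and pos :: "nat \<Rightarrow> nat \<Rightarrow> pixel option" and ldr :: "nat \<Rightarrow> nat"
begin

text \<open>c 0, ..., c d is the depth-first stack of pixels from the door to the leader.\<close>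

definition dflf_inv :: "nat \<Rightarrow> (nat \<Rightarrow> pixel) \<Rightarrow> nat \<Rightarrow> bool" where
  "dflf_inv t c d \<longleftrightarrow>
     t = d + 2 * ldr t \<and> c 0 = s \<and> inj_on c {..d} \<and> c ` {..d} \<subseteq> R \<and>
     convoy pos (ldr t) t c \<and> convoy pos (ldr t) (t - 1) c \<and>
     inj_on (\<lambda>k. pos k t) {..<ldr t} \<and>
     (\<forall>k<ldr t. \<exists>q. pos k t = Some q \<and> q \<in> R - c ` {..d} \<and>
        (\<forall>q'\<in>R. nbr q q' \<longrightarrow> q' \<in> visited pos t)) \<and>
     visited pos t = c ` {..d} \<union> stopped_pixels pos (ldr t) t"

lemma dflf_inv_0:
  assumes "s \<in> R" and "dflf_run R s pos ldr"
  shows "dflf_inv 0 (\<lambda>_. s) 0"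
proof -
  have "convoy pos 0 0 (\<lambda>_. s)"
    using assms(2) unfolding dflf_run_def convoy_def by auto
  moreover then have "occ pos 0 = {s}"
    by (simp add: occ_convoy stopped_pixels_def)
  ultimately show ?thesis
    using assms unfolding dflf_inv_def dflf_run_def by (simp add: visited_0 stopped_pixels_def)
qed

lemma
  assumes "dflf_inv t c d"
  shows dflf_inv_time: "t = d + 2 * ldr t"
    and dflf_inv_door: "c 0 = s"
    and dflf_inv_inj: "inj_on c {..d}"
    and dflf_inv_path: "c ` {..d} \<subseteq> R"
    and dflf_inv_convoy: "convoy pos (ldr t) t c"
    and dflf_inv_convoy_prev: "convoy pos (ldr t) (t - 1) c"
    and dflf_inv_stopped_inj: "inj_on (\<lambda>k. pos k t) {..<ldr t}"
    and dflf_inv_stopped: "\<forall>k<ldr t. \<exists>q. pos k t = Some q \<and> q \<in> R - c ` {..d} \<and>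
                             (\<forall>q'\<in>R. nbr q q' \<longrightarrow> q' \<in> visited pos t)"
    and dflf_inv_visited: "visited pos t = c ` {..d} \<union> stopped_pixels pos (ldr t) t"
  using assms unfolding dflf_inv_def by auto

lemma dflf_inv_leader:
  assumes "dflf_inv t c d"
  shows "pos (ldr t) t = Some (c d)"
proof -
  have "2 * ldr t \<le> t" and "t - 2 * ldr t = d"
    using dflf_inv_time[OF assms] by linarith+
  then show ?thesis
    using dflf_inv_convoy[OF assms] unfolding convoy_def by auto
qed

lemma dflf_inv_door_occupied_iff_even:
  assumes "dflf_inv t c d"
  shows "s \<in> occ pos t \<longleftrightarrow> even t"
proof -
  let ?L = "ldr t"
  note t = dflf_inv_time[OF assms] and c0 = dflf_inv_door[OF assms]
  have off: "s \<notin> stopped_pixels pos ?L t"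
    using dflf_inv_stopped[OF assms] c0 unfolding stopped_pixels_def by force
  have "c (t - 2 * k) = s \<longleftrightarrow> t = 2 * k" if "?L \<le> k" "2 * k \<le> t" for k
    using inj_onD[OF dflf_inv_inj[OF assms], of "t - 2 * k" 0] that t c0 by auto
  then have "s \<in> occ pos t \<longleftrightarrow> (\<exists>k. ?L \<le> k \<and> t = 2 * k)"
    using occ_convoy[OF dflf_inv_convoy[OF assms]] off by force
  also have "\<dots> \<longleftrightarrow> even t"
    using t by presburger
  finally show ?thesis .
qed

lemma dflf_step_follower:
  assumes inv: "dflf_inv t c d" and step: "dflf_step R s pos ldr t" and k: "ldr t < k"
  shows "pos k (Suc t) = (if 2 * k \<le> Suc t then Some (c (Suc t - 2 * k)) else None)"
proof (cases "2 * k \<le> t")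
  case True
  then have "pos k t \<noteq> None"
    using dflf_inv_convoy[OF inv] k unfolding convoy_def by auto
  then have "pos k (Suc t) = pos (k - 1) (t - 1)"
    using step k unfolding dflf_step_def by auto
  also have "\<dots> = Some (c (t - 1 - 2 * (k - 1)))"
    using dflf_inv_convoy_prev[OF inv] k True unfolding convoy_def by auto
  also have "t - 1 - 2 * (k - 1) = Suc t - 2 * k"
    using True k by auto
  finally show ?thesis
    using True by simp
next
  case False
  have "pos k t = None" and "pos (k - 1) t \<noteq> None \<longleftrightarrow> 2 * k \<le> t + 2"
    using dflf_inv_convoy[OF inv] k False unfolding convoy_def by auto
  then have "pos k (Suc t) = (if odd t \<and> 2 * k \<le> t + 2 then Some s else None)"
    using step k dflf_inv_door_occupied_iff_even[OF inv] unfolding dflf_step_def by auto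
  moreover have "odd t \<and> 2 * k \<le> t + 2 \<longleftrightarrow> 2 * k = Suc t"
    using False by presburger
  ultimately show ?thesis
    using False dflf_inv_door[OF inv] by auto
qed

lemma dflf_step_stopped:
  assumes inv: "dflf_inv t c d" and step: "dflf_step R s pos ldr t" and k: "k < ldr t"
  shows "pos k (Suc t) = pos k t"
  using dflf_inv_stopped[OF inv] step k unfolding dflf_step_def by fastforce

lemma dflf_step_stopped_inj:
  assumes inv: "dflf_inv t c d" and step: "dflf_step R s pos ldr t"
  shows "inj_on (\<lambda>k. pos k (Suc t)) {..<ldr t}"
  using inj_on_cong[of "{..<ldr t}" "\<lambda>k. pos k (Suc t)" "\<lambda>k. pos k t"]
    dflf_step_stopped[OF inv step] dflf_inv_stopped_inj[OF inv] by simp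

lemma dflf_step_stopped_dead_end:
  assumes inv: "dflf_inv t c d" and step: "dflf_step R s pos ldr t" and k: "k < ldr t"
    and P: "P \<subseteq> c ` {..d} \<union> - visited pos t"
  shows "\<exists>p. pos k (Suc t) = Some p \<and> p \<in> R - P \<and>
           (\<forall>p'\<in>R. nbr p p' \<longrightarrow> p' \<in> visited pos (Suc t))"
proof -
  obtain p where p: "pos k t = Some p" "p \<in> R - c ` {..d}"
    and closed: "\<forall>p'\<in>R. nbr p p' \<longrightarrow> p' \<in> visited pos t"
    using dflf_inv_stopped[OF inv] k by blast
  have "p \<in> visited pos t"
    using p k dflf_inv_visited[OF inv] unfolding stopped_pixels_def by auto
  then have "p \<notin> P"
    using P p by auto
  then show ?thesis
    using p closed dflf_step_stopped[OF inv step k] by (auto simp: visited_Suc)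
qed

lemma dflf_inv_advance:
  assumes inv: "dflf_inv t c d" and step: "dflf_step R s pos ldr t"
    and fr: "\<exists>q\<in>frontier R pos t. nbr (c d) q"
  shows "\<exists>c'. dflf_inv (Suc t) c' (Suc d)"
proof -
  let ?L = "ldr t"
  obtain q where q: "q \<in> frontier R pos t" and L: "ldr (Suc t) = ?L"
    and pq: "pos ?L (Suc t) = Some q"
    using step fr dflf_inv_leader[OF inv] unfolding dflf_step_def by auto
  have qR: "q \<in> R" and q_new: "q \<notin> visited pos t"
    using q frontier_eq_Diff_visited by auto
  note t = dflf_inv_time[OF inv] and vis = dflf_inv_visited[OF inv]
  define c' where "c' = c(Suc d := q)"
  have agree: "\<forall>i\<le>d. c' i = c i"
    unfolding c'_def by simp
  have img: "c' ` {..Suc d} = insert q (c ` {..d})"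
    unfolding c'_def by (rule image_fun_upd_atMost_Suc)
  have inj: "inj_on c' {..Suc d}"
    unfolding c'_def using q_new vis by (intro inj_on_fun_upd_atMost_Suc dflf_inv_inj[OF inv]) auto
  have stopped: "stopped_pixels pos ?L (Suc t) = stopped_pixels pos ?L t"
    using dflf_step_stopped[OF inv step] unfolding stopped_pixels_def by auto
  have cv: "convoy pos ?L (Suc t) c'"
    unfolding convoy_def
  proof (intro allI impI)
    fix k assume "?L \<le> k"
    then consider "k = ?L" | "?L < k" by linarith
    then show "pos k (Suc t) = (if 2 * k \<le> Suc t then Some (c' (Suc t - 2 * k)) else None)"
    proof cases
      case 1
      moreover have "Suc t - 2 * ?L = Suc d"
        using t by linarith
      ultimately show ?thesis using pq t by (simp add: c'_def)
    next
      case 2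
      then show ?thesis using dflf_step_follower[OF inv step] agree t by auto
    qed
  qed
  have cv_prev: "convoy pos ?L (Suc t - 1) c'"
    using convoy_mono[OF dflf_inv_convoy[OF inv]] agree t by auto
  have "occ pos (Suc t) \<subseteq> c' ` {..Suc d} \<union> stopped_pixels pos ?L t" and "q \<in> occ pos (Suc t)"
    using occ_convoy[OF cv] stopped t pq by (auto simp: occ_def)
  then have vis': "visited pos (Suc t) = c' ` {..Suc d} \<union> stopped_pixels pos ?L (Suc t)"
    using vis img stopped by (auto simp: visited_Suc)
  have "c' ` {..Suc d} \<subseteq> c ` {..d} \<union> - visited pos t"
    using img q_new by auto
  then have "\<forall>k<?L. \<exists>p. pos k (Suc t) = Some p \<and> p \<in> R - c' ` {..Suc d} \<and>
               (\<forall>p'\<in>R. nbr p p' \<longrightarrow> p' \<in> visited pos (Suc t))"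
    using dflf_step_stopped_dead_end[OF inv step] by blast
  moreover have "c' 0 = s" and "c' ` {..Suc d} \<subseteq> R"
    using dflf_inv_door[OF inv] dflf_inv_path[OF inv] img qR by (auto simp: c'_def)
  ultimately have "dflf_inv (Suc t) c' (Suc d)"
    unfolding dflf_inv_def L using t inj cv cv_prev vis' dflf_step_stopped_inj[OF inv step] by simp
  then show ?thesis by blast
qed

lemma dflf_inv_retreat:
  assumes inv: "dflf_inv t c d" and step: "dflf_step R s pos ldr t"
    and running: "\<not> halted R s pos ldr t" and no_fr: "\<not> (\<exists>q\<in>frontier R pos t. nbr (c d) q)"
  shows "d \<noteq> 0 \<and> dflf_inv (Suc t) c (d - 1)"
proof -
  let ?L = "ldr t"
  have L: "ldr (Suc t) = Suc ?L" and pL: "pos ?L (Suc t) = Some (c d)"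
    using step no_fr dflf_inv_leader[OF inv] unfolding dflf_step_def by auto
  have "d \<noteq> 0"
  proof
    assume "d = 0"
    then show False
      using running no_fr dflf_inv_leader[OF inv] dflf_inv_door[OF inv] unfolding halted_def by simp
  qed
  then obtain e where e: "d = Suc e"
    using not0_implies_Suc by blast
  note t = dflf_inv_time[OF inv] and vis = dflf_inv_visited[OF inv]
  have img: "c ` {..d} = insert (c d) (c ` {..e})"
    using e by (simp add: atMost_Suc)
  have cd_off: "c d \<notin> c ` {..e}"
    using inj_on_image_mem_iff[OF dflf_inv_inj[OF inv], of d "{..e}"] e by auto
  have cd_closed: "\<forall>p'\<in>R. nbr (c d) p' \<longrightarrow> p' \<in> visited pos t"
    using no_fr frontier_eq_Diff_visited by auto
  have stopped: "stopped_pixels pos (Suc ?L) (Suc t) = insert (c d) (stopped_pixels pos ?L t)"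
    using pL dflf_step_stopped[OF inv step] unfolding stopped_pixels_def by (auto simp: less_Suc_eq)
  have cv: "convoy pos (Suc ?L) (Suc t) c"
    unfolding convoy_def using dflf_step_follower[OF inv step] by auto
  have cv_prev: "convoy pos (Suc ?L) (Suc t - 1) c"
    using convoy_mono[OF dflf_inv_convoy[OF inv]] by auto
  have "occ pos (Suc t) \<subseteq> c ` {..e} \<union> stopped_pixels pos (Suc ?L) (Suc t)"
    using occ_convoy[OF cv] t e by auto
  then have vis': "visited pos (Suc t) = c ` {..e} \<union> stopped_pixels pos (Suc ?L) (Suc t)"
    using vis img stopped by (auto simp: visited_Suc)
  have "\<exists>p. pos k (Suc t) = Some p \<and> p \<in> R - c ` {..e} \<and>
          (\<forall>p'\<in>R. nbr p p' \<longrightarrow> p' \<in> visited pos (Suc t))" if k: "k < Suc ?L" for k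
  proof (cases "k = ?L")
    case True
    then show ?thesis
      using pL cd_off cd_closed dflf_inv_path[OF inv] by (auto simp: visited_Suc)
  next
    case False
    then show ?thesis
      using dflf_step_stopped_dead_end[OF inv step, of k "c ` {..e}"] k img by auto
  qed
  moreover have "inj_on (\<lambda>k. pos k (Suc t)) {..<Suc ?L}"
  proof -
    have "Some (c d) \<notin> (\<lambda>k. pos k (Suc t)) ` {..<?L}"
      using dflf_step_stopped_dead_end[OF inv step, of _ "{c d}"] by fastforce
    then show ?thesis
      using dflf_step_stopped_inj[OF inv step] pL by (simp add: lessThan_Suc)
  qed
  moreover have "inj_on c {..e}" and "c ` {..e} \<subseteq> R"
    using dflf_inv_inj[OF inv] dflf_inv_path[OF inv] e by (auto intro: inj_on_subset)
  ultimately have "dflf_inv (Suc t) c e"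
    unfolding dflf_inv_def L using t e dflf_inv_door[OF inv] cv cv_prev vis' by simp
  then show ?thesis
    using e by simp
qed

lemma dflf_inv_Suc:
  assumes "dflf_inv t c d" and "dflf_step R s pos ldr t" and "\<not> halted R s pos ldr t"
  shows "\<exists>c' d'. dflf_inv (Suc t) c' d'"
  using dflf_inv_advance[OF assms(1,2)] dflf_inv_retreat[OF assms] by blast

lemma dflf_inv_exists:
  assumes "s \<in> R" and run: "dflf_run R s pos ldr" and "\<forall>t'<t. \<not> halted R s pos ldr t'"
  shows "\<exists>c d. dflf_inv t c d"
  using assms(3)
proof (induction t)
  case 0
  then show ?case
    using dflf_inv_0[OF assms(1,2)] by blast
next
  case (Suc t)
  then obtain c d where "dflf_inv t c d"
    by auto
  moreover have "dflf_step R s pos ldr t"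
    using run Suc.prems unfolding dflf_run_def by auto
  ultimately show ?case
    using dflf_inv_Suc Suc.prems by blast
qed

lemma dflf_inv_visited_subset:
  assumes "dflf_inv t c d"
  shows "visited pos t \<subseteq> R"
proof -
  have "q \<in> R" if q: "q \<in> stopped_pixels pos (ldr t) t" for q
  proof -
    obtain k where "k < ldr t" and "pos k t = Some q"
      using q unfolding stopped_pixels_def by blast
    then show ?thesis
      using dflf_inv_stopped[OF assms] by auto
  qed
  then show ?thesis
    using dflf_inv_visited[OF assms] dflf_inv_path[OF assms] by auto
qed

lemma dflf_inv_card_visited:
  assumes "dflf_inv t c d"
  shows "card (visited pos t) = Suc d + ldr t"
proof -
  let ?S = "stopped_pixels pos (ldr t) t"
  have Some_S: "Some ` ?S = (\<lambda>k. pos k t) ` {..<ldr t}"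
    using dflf_inv_stopped[OF assms] unfolding stopped_pixels_def by force
  then have "card ?S = ldr t"
    using card_image[OF dflf_inv_stopped_inj[OF assms]] card_image[of Some ?S] by simp
  moreover have "finite ?S"
  proof -
    have "finite (Some ` ?S)"
      using Some_S by simp
    then show ?thesis
      by (rule finite_imageD) simp
  qed
  moreover have "card (c ` {..d}) = Suc d"
    using card_image[OF dflf_inv_inj[OF assms]] by simp
  moreover have "c ` {..d} \<inter> ?S = {}"
    using dflf_inv_stopped[OF assms] unfolding stopped_pixels_def by force
  ultimately show ?thesis
    using dflf_inv_visited[OF assms] card_Un_disjoint[of "c ` {..d}" ?S] by simp
qed

lemma dflf_inv_time_bound:
  assumes "finite R" and "dflf_inv t c d"
  shows "t + 2 \<le> 2 * card R"
proof -
  have "Suc d + ldr t \<le> card R"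
    using card_mono[OF assms(1) dflf_inv_visited_subset[OF assms(2)]]
      dflf_inv_card_visited[OF assms(2)] by simp
  then show ?thesis
    using dflf_inv_time[OF assms(2)] by linarith
qed

lemma dflf_halts:
  assumes "finite R" and "s \<in> R" and "dflf_run R s pos ldr"
  shows "\<exists>H. halted R s pos ldr H"
proof (rule ccontr)
  assume "\<nexists>H. halted R s pos ldr H"
  then obtain c d where "dflf_inv (2 * card R) c d"
    using dflf_inv_exists[OF assms(2,3)] by blast
  then show False
    using dflf_inv_time_bound[OF assms(1)] by fastforce
qed

lemma dflf_inv_not_covered:
  assumes inv: "dflf_inv t c d" and running: "\<not> halted R s pos ldr t"
  shows "\<not> R \<subseteq> occ pos t"
proof (cases "d = 0")
  case True
  then obtain q where "q \<in> frontier R pos t"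
    using running dflf_inv_leader[OF inv] dflf_inv_door[OF inv] unfolding halted_def by auto
  then show ?thesis
    using occ_subset_visited frontier_eq_Diff_visited by blast
next
  case False
  let ?L = "ldr t"
  have "c (d - 1) \<notin> stopped_pixels pos ?L t"
  proof
    assume "c (d - 1) \<in> stopped_pixels pos ?L t"
    then obtain k where "k < ?L" and "pos k t = Some (c (d - 1))"
      unfolding stopped_pixels_def by blast
    then show False
      using dflf_inv_stopped[OF inv] by fastforce
  qed
  moreover have "c (d - 1) \<noteq> c (t - 2 * k)" if "?L \<le> k" "2 * k \<le> t" for k
  proof -
    have "t - 2 * k \<le> d" and "t - 2 * k \<noteq> d - 1"
      using that dflf_inv_time[OF inv] False by presburger+
    then show ?thesis
      using inj_onD[OF dflf_inv_inj[OF inv], of "d - 1" "t - 2 * k"] by auto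
  qed
  ultimately have "c (d - 1) \<notin> occ pos t"
    unfolding occ_convoy[OF dflf_inv_convoy[OF inv]] by blast
  moreover have "c (d - 1) \<in> R"
    using dflf_inv_path[OF inv] by auto
  ultimately show ?thesis
    by blast
qed

lemma dflf_inv_halted_stack_trivial:
  assumes inv: "dflf_inv t c d" and "halted R s pos ldr t"
  shows "d = 0"
proof -
  have "c d = c 0"
    using assms(2) dflf_inv_leader[OF inv] dflf_inv_door[OF inv] unfolding halted_def by simp
  then show ?thesis
    using inj_onD[OF dflf_inv_inj[OF inv], of d 0] by simp
qed

lemma dflf_inv_occ_eq_visited:
  assumes inv: "dflf_inv t c 0"
  shows "occ pos t = visited pos t"
proof -
  have "{k. ldr t \<le> k \<and> 2 * k \<le> t} = {ldr t}"
    using dflf_inv_time[OF inv] by auto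
  then show ?thesis
    unfolding occ_convoy[OF dflf_inv_convoy[OF inv]] dflf_inv_visited[OF inv]
    using dflf_inv_time[OF inv] by auto
qed

lemma dflf_inv_halted_visited_eq:
  assumes "pix_connected R" and "s \<in> R"
    and inv: "dflf_inv t c 0" and halt: "halted R s pos ldr t"
  shows "visited pos t = R"
proof -
  have vis: "visited pos t = insert s (stopped_pixels pos (ldr t) t)"
    using dflf_inv_visited[OF inv] dflf_inv_door[OF inv] by simp
  have closed: "\<forall>p\<in>visited pos t. \<forall>q\<in>R. nbr p q \<longrightarrow> q \<in> visited pos t"
  proof (intro ballI impI)
    fix p q assume p: "p \<in> visited pos t" and q: "q \<in> R" and pq: "nbr p q"
    show "q \<in> visited pos t"
    proof (cases "p = s")
      case True
      then show ?thesis
        using halt q pq frontier_eq_Diff_visited unfolding halted_def by blast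
    next
      case False
      then obtain k where "k < ldr t" and "pos k t = Some p"
        using p vis unfolding stopped_pixels_def by blast
      then show ?thesis
        using dflf_inv_stopped[OF inv] q pq by fastforce
    qed
  qed
  have "R \<subseteq> visited pos t"
    using pix_connected_nbr_closed_subset[OF assms(1,2) _ closed] vis by simp
  then show ?thesis
    using dflf_inv_visited_subset[OF inv] by blast
qed

end

theorem mainTheorem3:
  fixes R :: "pixel set" and s :: pixel
    and pos :: "nat \<Rightarrow> nat \<Rightarrow> pixel option" and ldr :: "nat \<Rightarrow> nat"
  assumes "finite R" and "s \<in> R" and "pix_connected R"
    and "dflf_run R s pos ldr"
  shows "\<exists>H. halted R s pos ldr H \<and> (\<forall>t<H. \<not> halted R s pos ldr t)
            \<and> R \<subseteq> occ pos H \<and> (\<forall>t<H. \<not> R \<subseteq> occ pos t)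
            \<and> makespan R pos + 1 = 2 * card R - 1"
proof -
  obtain H where halt: "halted R s pos ldr H" and running: "\<forall>t<H. \<not> halted R s pos ldr t"
    using dflf_halts[OF assms(1,2,4)] exists_least_iff[of "halted R s pos ldr"] by blast
  obtain c d where inv: "dflf_inv R s pos ldr H c d"
    using dflf_inv_exists[OF assms(2,4) running] by blast
  have d0: "d = 0"
    using dflf_inv_halted_stack_trivial[OF inv halt] .
  then have visited: "visited pos H = R" and covered: "occ pos H = R"
    using dflf_inv_halted_visited_eq[OF assms(3,2)] dflf_inv_occ_eq_visited inv halt by auto
  have uncovered: "\<not> R \<subseteq> occ pos t" if t: "t < H" for t
  proof -
    obtain c d where "dflf_inv R s pos ldr t c d"
      using dflf_inv_exists[OF assms(2,4)] running t by (meson order.strict_trans)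
    then show ?thesis
      using dflf_inv_not_covered running t by blast
  qed
  have "makespan R pos = H"
    unfolding makespan_def using covered uncovered by (intro Least_equality) (auto simp: not_less[symmetric])
  moreover have "card R = Suc (ldr H)"
    using dflf_inv_card_visited[OF inv] visited d0 by simp
  moreover have "H = 2 * ldr H"
    using dflf_inv_time[OF inv] d0 by simp
  ultimately show ?thesis
    using halt running covered uncovered by auto
qed

end
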